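(* Let $A$ be a complex $r$-matrix of order $n_1\times\cdots\times n_r$ and write $N=n_1\cdots n_r$. Then: (a) $\|A\|_1=|A|_{\max}$; (b) if $p\geq q\geq 1$, then $\|A\|_p\geq\|A\|_q$; (c) if $p\geq q\geq 1$, then $N^{1/p}\|A\|_p\leq N^{1/q}\|A\|_q$; (d) $\|A\|_p\leq|A|_1$ for every $p\geq1$; (e) if $p\geq q\geq 1$, then $0\leq\|A\|_p-\|A\|_q\leq (p-q)\,|A|_1\,N\log N$.
   Context: An $r$-matrix $A$ of order $n_1\times\cdots\times n_r$ is a function on $[n_1]\times\cdots\times[n_r]$ with values $a_{i_1,\ldots,i_r}$. $|A|_{\max}=\max|a_{i_1,\ldots,i_r}|$ and $|A|_1=\sum|a_{i_1,\ldots,i_r}|$. The linear form is $L_A(\mathbf{x}^{(1)},\ldots,\mathbf{x}^{(r)})=\sum a_{i_1,\ldots,i_r}\overline{x^{(1)}_{i_1}}\cdots\overline{x^{(r)}_{i_r}}$ for $\mathbf{x}^{(k)}\in\mathbb{C}^{n_k}$, and for real $p\geq1$ the spectral $p$-norm is $\|A\|_p=\max\{|L_A(\mathbf{x}^{(1)},\ldots,\mathbf{x}^{(r)})|:|\mathbf{x}^{(1)}|_p=\cdots=|\mathbf{x}^{(r)}|_p=1\}$, where $|\cdot|_p$ is the $\ell^p$ norm. *)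

theory Defs
  imports "HOL-Analysis.Analysis"
begin

text \<open>An r-matrix of order n_1 x ... x n_r is represented by the list of dimensions
  ns = [n_1, ..., n_r] and a function A on index lists (0-based indices).
  Only the values of A on the index set matter.\<close>

definition idx :: "nat list \<Rightarrow> nat list set" where
  "idx ns = {is. length is = length ns \<and> (\<forall>k<length ns. is ! k < ns ! k)}"

definition maxabs :: "nat list \<Rightarrow> (nat list \<Rightarrow> complex) \<Rightarrow> real" where
  "maxabs ns A = Max ((\<lambda>is. cmod (A is)) ` idx ns)"

definition norm1 :: "nat list \<Rightarrow> (nat list \<Rightarrow> complex) \<Rightarrow> real" where
  "norm1 ns A = (\<Sum>is\<in>idx ns. cmod (A is))"

definition lpnorm :: "real \<Rightarrow> nat \<Rightarrow> (nat \<Rightarrow> complex) \<Rightarrow> real" where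
  "lpnorm p n x = (\<Sum>i<n. cmod (x i) powr p) powr (1 / p)"

text \<open>Linear form; xs k is the vector x^(k+1).\<close>
definition linform :: "nat list \<Rightarrow> (nat list \<Rightarrow> complex) \<Rightarrow> (nat \<Rightarrow> nat \<Rightarrow> complex) \<Rightarrow> complex" where
  "linform ns A xs = (\<Sum>is\<in>idx ns. A is * (\<Prod>k<length ns. cnj (xs k (is ! k))))"

definition specnorm :: "real \<Rightarrow> nat list \<Rightarrow> (nat list \<Rightarrow> complex) \<Rightarrow> real" where
  "specnorm p ns A = Sup {cmod (linform ns A xs) | xs.
      \<forall>k<length ns. lpnorm p (ns ! k) (xs k) = 1}"

end

theory Submission
  imports Defs "HOL-Analysis.Analysis"
begin

text \<open>Evaluating \<open>L\<^sub>A\<close> at tuples of coordinate vectors and bounding it by the triangle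
  inequality gives (a) and (d). Normalising each vector shows
  \<open>|L\<^sub>A(x\<^sup>1,\<dots>,x\<^sup>r)| \<le> \<parallel>A\<parallel>\<^sub>p \<Prod>\<^sub>k |x\<^sup>k|\<^sub>p\<close>; together with \<open>|x|\<^sub>p \<le> |x|\<^sub>q\<close> and the
  power-mean inequality \<open>|x|\<^sub>q \<le> n\<^bsup>1/q - 1/p\<^esup> |x|\<^sub>p\<close> this yields (b) and
  \<open>\<parallel>A\<parallel>\<^sub>p \<le> N\<^bsup>1/q - 1/p\<^esup> \<parallel>A\<parallel>\<^sub>q\<close>, hence (c). Part (e) follows from the latter, (d), and
  \<open>x\<^sup>t - 1 \<le> t ln x \<cdot> x\<^sup>t\<close> for \<open>x \<ge> 1\<close>, applied with \<open>t = 1/q - 1/p \<le> min 1 (p - q)\<close>.\<close>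

lemma powr_minus_1_le:
  fixes x t :: real
  assumes "1 \<le> x" "0 \<le> t"
  shows "x powr t - 1 \<le> t * ln x * x powr t"
proof -
  define u where "u = t * ln x"
  have x_powr: "x powr t = exp u"
    using assms by (simp add: powr_def u_def mult.commute)
  have "1 - u \<le> exp (- u)"
    using exp_ge_add_one_self[of "- u"] by simp
  then have "(1 - u) * exp u \<le> exp (- u) * exp u"
    by (intro mult_right_mono) auto
  then show ?thesis
    by (simp add: x_powr u_def[symmetric] exp_minus field_simps)
qed

lemma inverse_diff_le_diff:
  fixes p q :: real
  assumes "1 \<le> q" "q \<le> p"
  shows "1 / q - 1 / p \<le> p - q"
proof -
  have "1 \<le> p * q"
    using assms mult_mono[of 1 p 1 q] by simp
  then have "(p - q) / (p * q) \<le> p - q"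
    using assms by (simp add: divide_le_eq mult_le_cancel_left1)
  then show ?thesis
    using assms by (simp add: diff_divide_distrib)
qed

lemma idx_Nil: "idx [] = {[]}"
  by (auto simp: idx_def)

lemma idx_Cons: "idx (n # ns) = (\<lambda>(i, ks). i # ks) ` ({..<n} \<times> idx ns)"
proof (intro set_eqI iffI)
  fix js assume "js \<in> idx (n # ns)"
  then obtain i ks where js: "js = i # ks" and len: "length ks = length ns"
    and lt: "\<forall>k<Suc (length ns). js ! k < (n # ns) ! k"
    unfolding idx_def by (cases js) auto
  have "i < n" using lt js by (metis nth_Cons_0 zero_less_Suc)
  moreover have "ks \<in> idx ns" using lt len js unfolding idx_def by force
  ultimately show "js \<in> (\<lambda>(i, ks). i # ks) ` ({..<n} \<times> idx ns)" using js by auto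
qed (auto simp: idx_def nth_Cons split: nat.splits)

lemma finite_idx: "finite (idx ns)"
  by (induction ns) (auto simp: idx_Nil idx_Cons)

lemma replicate_0_in_idx:
  assumes "\<forall>k<length ns. 0 < ns ! k"
  shows "replicate (length ns) 0 \<in> idx ns"
  using assms by (simp add: idx_def)

lemma sum_idx_prod:
  fixes f :: "nat \<Rightarrow> nat \<Rightarrow> 'a::comm_semiring_1"
  shows "(\<Sum>ks\<in>idx ns. \<Prod>k<length ns. f k (ks ! k)) = (\<Prod>k<length ns. \<Sum>i<ns ! k. f k i)"
proof (induction ns arbitrary: f)
  case Nil
  then show ?case by (simp add: idx_Nil)
next
  case (Cons n ns)
  have inj: "inj_on (\<lambda>(i, ks). i # ks) ({..<n} \<times> idx ns)"
    by (auto simp: inj_on_def)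
  have "(\<Sum>ks\<in>idx (n # ns). \<Prod>k<length (n # ns). f k (ks ! k))
      = (\<Sum>(i, ks)\<in>{..<n} \<times> idx ns. f 0 i * (\<Prod>k<length ns. f (Suc k) (ks ! k)))"
    unfolding idx_Cons sum.reindex[OF inj]
    by (simp add: comp_def case_prod_unfold prod.lessThan_Suc_shift del: prod.lessThan_Suc)
  also have "\<dots> = (\<Sum>i<n. f 0 i) * (\<Prod>k<length ns. \<Sum>i<ns ! k. f (Suc k) i)"
    by (simp add: sum_product sum.cartesian_product Cons.IH[of "\<lambda>k. f (Suc k)", symmetric])
  also have "\<dots> = (\<Prod>k<length (n # ns). \<Sum>i<(n # ns) ! k. f k i)"
    by (simp add: prod.lessThan_Suc_shift del: prod.lessThan_Suc)
  finally show ?case .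
qed

lemma prod_list_conv_prod_nth: "prod_list ns = (\<Prod>k<length ns. ns ! k)"
  by (induction ns) (simp_all add: prod.lessThan_Suc_shift del: prod.lessThan_Suc)

lemma lpnorm_nonneg: "0 \<le> lpnorm p n x"
  by (simp add: lpnorm_def)

lemma lpnorm_eq_0_iff: "lpnorm p n x = 0 \<longleftrightarrow> (\<forall>i<n. x i = 0)"
  unfolding lpnorm_def by (auto simp: sum_nonneg_eq_0_iff)

lemma lpnorm_1: "lpnorm 1 n x = (\<Sum>i<n. cmod (x i))"
  unfolding lpnorm_def by (simp add: sum_nonneg)

lemma lpnorm_eq_1_iff:
  assumes "0 < p"
  shows "lpnorm p n x = 1 \<longleftrightarrow> (\<Sum>i<n. cmod (x i) powr p) = 1"
proof -
  have "(\<Sum>i<n. cmod (x i) powr p) = lpnorm p n x powr p"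
    using assms by (simp add: lpnorm_def powr_powr sum_nonneg)
  then show ?thesis
    using assms by (auto simp: lpnorm_def)
qed

lemma lpnorm_scale:
  assumes "0 < p" "0 \<le> c"
  shows "lpnorm p n (\<lambda>i. complex_of_real c * x i) = c * lpnorm p n x"
proof -
  have "(\<Sum>i<n. cmod (complex_of_real c * x i) powr p) = c powr p * (\<Sum>i<n. cmod (x i) powr p)"
    using assms by (simp add: norm_mult powr_mult sum_distrib_left)
  then show ?thesis
    unfolding lpnorm_def using assms by (simp add: powr_mult powr_powr)
qed

lemma lpnorm_normalize:
  assumes "0 < p" "lpnorm p n x \<noteq> 0"
  shows "lpnorm p n (\<lambda>i. complex_of_real (1 / lpnorm p n x) * x i) = 1"
  using assms lpnorm_nonneg[of p n x] by (subst lpnorm_scale) auto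

lemma norm_le_1_if_lpnorm_eq_1:
  assumes "0 < p" "lpnorm p n x = 1" "i < n"
  shows "cmod (x i) \<le> 1"
proof -
  have "cmod (x i) powr p \<le> (\<Sum>i<n. cmod (x i) powr p)"
    using assms(3) by (intro member_le_sum) auto
  then have "cmod (x i) powr p \<le> 1 powr p"
    using assms lpnorm_eq_1_iff by simp
  then show ?thesis
    using assms(1) powr_less_mono2[of p 1 "cmod (x i)"] by fastforce
qed

lemma lpnorm_le_if_le_on_unit_sphere:
  assumes "0 < p" "0 < q" "\<And>y. lpnorm q n y = 1 \<Longrightarrow> lpnorm p n y \<le> C"
  shows "lpnorm p n x \<le> C * lpnorm q n x"
proof (cases "lpnorm q n x = 0")
  case True
  then have "lpnorm p n x = 0" by (simp add: lpnorm_eq_0_iff)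
  then show ?thesis using True by simp
next
  case False
  define c where "c = lpnorm q n x"
  have c: "0 < c" using False lpnorm_nonneg[of q n x] by (simp add: c_def)
  have "(1 / c) * lpnorm p n x = lpnorm p n (\<lambda>i. complex_of_real (1 / c) * x i)"
    using assms(1) c by (subst lpnorm_scale) auto
  also have "\<dots> \<le> C"
    using assms(3) lpnorm_normalize[OF assms(2) False] by (simp only: c_def)
  finally show ?thesis
    using c by (simp add: c_def field_simps)
qed

lemma lpnorm_antimono:
  assumes "0 < q" "q \<le> p"
  shows "lpnorm p n x \<le> lpnorm q n x"
proof -
  have "lpnorm p n y \<le> 1" if y: "lpnorm q n y = 1" for y
  proof -
    have "cmod (y i) \<le> 1" if "i < n" for i
      using norm_le_1_if_lpnorm_eq_1[OF assms(1) y that] .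
    then have "(\<Sum>i<n. cmod (y i) powr p) \<le> (\<Sum>i<n. cmod (y i) powr q)"
      using assms by (intro sum_mono powr_mono') auto
    also have "\<dots> = 1"
      using assms y lpnorm_eq_1_iff by blast
    finally show ?thesis
      unfolding lpnorm_def using assms by (intro powr_le1) (auto simp: sum_nonneg)
  qed
  then show ?thesis
    using lpnorm_le_if_le_on_unit_sphere[of p q n 1 x] assms by simp
qed

lemma lpnorm_le_powr_mult:
  assumes "0 < q" "q \<le> p"
  shows "lpnorm q n x \<le> real n powr (1 / q - 1 / p) * lpnorm p n x"
proof -
  have "lpnorm q n y \<le> real n powr (1 / q - 1 / p)" if y: "lpnorm p n y = 1" for y
  proof -
    have p: "0 < p" using assms by simp
    define a where "a = q / p"
    define b where "b = 1 - a"
    have ab: "0 \<le> a" "0 \<le> b" "a + b = 1"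
      using assms by (auto simp: a_def b_def)
    have "n \<noteq> 0"
    proof
      assume "n = 0"
      then show False using y by (simp add: lpnorm_def)
    qed
    have young: "cmod (y i) powr q * (1 / real n) powr b \<le> a * cmod (y i) powr p + b * (1 / real n)" for i
    proof (cases "y i = 0")
      case False
      have "(cmod (y i) powr p) powr a * (1 / real n) powr b \<le> a * cmod (y i) powr p + b * (1 / real n)"
        using ab False \<open>n \<noteq> 0\<close> by (intro Youngs_inequality_0) auto
      then show ?thesis using p by (simp add: powr_powr a_def)
    qed (use ab in simp)
    have "(\<Sum>i<n. cmod (y i) powr q) * (1 / real n) powr b
        \<le> (\<Sum>i<n. a * cmod (y i) powr p + b * (1 / real n))"
      unfolding sum_distrib_right by (intro sum_mono young)
    also have "\<dots> = a * (\<Sum>i<n. cmod (y i) powr p) + b"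
      using \<open>n \<noteq> 0\<close> by (simp add: sum.distrib sum_distrib_left)
    also have "\<dots> = 1"
      using p y ab lpnorm_eq_1_iff by auto
    finally have "(\<Sum>i<n. cmod (y i) powr q) \<le> real n powr b"
      using \<open>n \<noteq> 0\<close> by (simp add: powr_divide field_simps)
    then have "lpnorm q n y \<le> (real n powr b) powr (1 / q)"
      unfolding lpnorm_def using assms by (intro powr_mono2) (auto simp: sum_nonneg)
    also have "\<dots> = real n powr (1 / q - 1 / p)"
      using assms by (simp add: powr_powr b_def a_def field_simps)
    finally show ?thesis .
  qed
  then show ?thesis
    using lpnorm_le_if_le_on_unit_sphere[of q p n _ x] assms by simp
qed

lemma norm_linform_le:
  "cmod (linform ns A xs) \<le> (\<Sum>ks\<in>idx ns. cmod (A ks) * (\<Prod>k<length ns. cmod (xs k (ks ! k))))"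
  unfolding linform_def by (rule order_trans[OF norm_sum]) (simp add: norm_mult prod_norm[symmetric])

lemma norm_linform_le_norm1:
  assumes "\<forall>k<length ns. \<forall>i<ns ! k. cmod (xs k i) \<le> 1"
  shows "cmod (linform ns A xs) \<le> norm1 ns A"
proof -
  have "(\<Prod>k<length ns. cmod (xs k (ks ! k))) \<le> 1" if "ks \<in> idx ns" for ks
    using assms that by (intro prod_le_1) (auto simp: idx_def)
  then have "(\<Sum>ks\<in>idx ns. cmod (A ks) * (\<Prod>k<length ns. cmod (xs k (ks ! k)))) \<le> norm1 ns A"
    unfolding norm1_def by (intro sum_mono mult_left_le) (auto intro: prod_nonneg)
  then show ?thesis using norm_linform_le order_trans by blast
qed

lemma norm_linform_le_maxabs:
  "cmod (linform ns A xs) \<le> maxabs ns A * (\<Prod>k<length ns. lpnorm 1 (ns ! k) (xs k))"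
proof -
  have "cmod (A ks) \<le> maxabs ns A" if "ks \<in> idx ns" for ks
    unfolding maxabs_def using that finite_idx by (intro Max_ge) auto
  then have "(\<Sum>ks\<in>idx ns. cmod (A ks) * (\<Prod>k<length ns. cmod (xs k (ks ! k))))
      \<le> (\<Sum>ks\<in>idx ns. maxabs ns A * (\<Prod>k<length ns. cmod (xs k (ks ! k))))"
    by (intro sum_mono mult_right_mono) (auto intro: prod_nonneg)
  also have "\<dots> = maxabs ns A * (\<Prod>k<length ns. lpnorm 1 (ns ! k) (xs k))"
    by (simp only: sum_distrib_left[symmetric] sum_idx_prod[of "\<lambda>k i. cmod (xs k i)"] lpnorm_1)
  finally show ?thesis using norm_linform_le order_trans by blast
qed

lemma linform_scale:
  "linform ns A (\<lambda>k i. complex_of_real (c k) * xs k i)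
    = complex_of_real (\<Prod>k<length ns. c k) * linform ns A xs"
  unfolding linform_def by (simp add: prod.distrib sum_distrib_left mult_ac)

lemma linform_eq_0:
  assumes "k < length ns" "\<forall>i<ns ! k. xs k i = 0"
  shows "linform ns A xs = 0"
  unfolding linform_def
proof (intro sum.neutral ballI)
  fix ks assume "ks \<in> idx ns"
  then have "cnj (xs k (ks ! k)) = 0" using assms by (simp add: idx_def)
  then have "(\<Prod>k<length ns. cnj (xs k (ks ! k))) = 0"
    using assms(1) by (intro prod_zero) auto
  then show "A ks * (\<Prod>k<length ns. cnj (xs k (ks ! k))) = 0" by simp
qed

definition coordinate_vectors :: "nat list \<Rightarrow> nat \<Rightarrow> nat \<Rightarrow> complex" where
  "coordinate_vectors js k i = (if i = js ! k then 1 else 0)"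

lemma lpnorm_coordinate_vectors:
  assumes "0 < p" "js \<in> idx ns" "k < length ns"
  shows "lpnorm p (ns ! k) (coordinate_vectors js k) = 1"
proof -
  have "(\<Sum>i<ns ! k. cmod (coordinate_vectors js k i) powr p) = (\<Sum>i<ns ! k. if i = js ! k then 1 else 0)"
    by (intro sum.cong) (auto simp: coordinate_vectors_def)
  then show ?thesis
    using assms by (simp add: lpnorm_def idx_def)
qed

lemma linform_coordinate_vectors:
  assumes "js \<in> idx ns"
  shows "linform ns A (coordinate_vectors js) = A js"
proof -
  have "(\<Prod>k<length ns. cnj (coordinate_vectors js k (ks ! k))) = (if ks = js then 1 else 0)"
    if "ks \<in> idx ns" for ks
  proof (cases "ks = js")
    case False
    have "\<exists>k<length ns. ks ! k \<noteq> js ! k"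
      using that assms False nth_equalityI[of ks js] by (auto simp: idx_def)
    then obtain k where "k < length ns" "ks ! k \<noteq> js ! k" by blast
    then show ?thesis
      using False by (auto simp: coordinate_vectors_def)
  qed (simp add: coordinate_vectors_def)
  then have "linform ns A (coordinate_vectors js) = (\<Sum>ks\<in>idx ns. if ks = js then A ks else 0)"
    unfolding linform_def by (intro sum.cong) auto
  also have "\<dots> = A js"
    using assms finite_idx by simp
  finally show ?thesis .
qed

lemma specnorm_upper:
  assumes "0 < p" "\<forall>k<length ns. lpnorm p (ns ! k) (xs k) = 1"
  shows "cmod (linform ns A xs) \<le> specnorm p ns A"
proof -
  have "bdd_above {cmod (linform ns A xs) | xs. \<forall>k<length ns. lpnorm p (ns ! k) (xs k) = 1}"
    using norm_linform_le_norm1 norm_le_1_if_lpnorm_eq_1[OF assms(1)]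
    by (intro bdd_aboveI[of _ "norm1 ns A"]) blast
  then show ?thesis
    unfolding specnorm_def using assms by (intro cSup_upper) auto
qed

text \<open>With a zero dimension the set in \<open>specnorm_def\<close> is empty and \<open>Sup\<close> returns a junk value.\<close>

context
  fixes ns :: "nat list"
  assumes dims_pos: "\<forall>k<length ns. 0 < ns ! k"
begin

lemma specnorm_least:
  assumes "0 < p" "\<And>xs. \<forall>k<length ns. lpnorm p (ns ! k) (xs k) = 1 \<Longrightarrow> cmod (linform ns A xs) \<le> B"
  shows "specnorm p ns A \<le> B"
proof -
  have "\<forall>k<length ns. lpnorm p (ns ! k) (coordinate_vectors (replicate (length ns) 0) k) = 1"
    using assms(1) replicate_0_in_idx[OF dims_pos] lpnorm_coordinate_vectors by blast
  then show ?thesis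
    unfolding specnorm_def using assms by (intro cSup_least) auto
qed

lemma specnorm_nonneg:
  assumes "0 < p"
  shows "0 \<le> specnorm p ns A"
  using assms replicate_0_in_idx[OF dims_pos] lpnorm_coordinate_vectors
  by (intro order_trans[OF norm_ge_zero specnorm_upper[where xs = "coordinate_vectors (replicate (length ns) 0)"]])
    blast+

lemma specnorm_le_norm1:
  assumes "0 < p"
  shows "specnorm p ns A \<le> norm1 ns A"
  using assms norm_linform_le_norm1 norm_le_1_if_lpnorm_eq_1[OF assms]
  by (intro specnorm_least) blast+

lemma norm_linform_le_specnorm:
  assumes "0 < p"
  shows "cmod (linform ns A xs) \<le> specnorm p ns A * (\<Prod>k<length ns. lpnorm p (ns ! k) (xs k))"
proof (cases "\<exists>k<length ns. lpnorm p (ns ! k) (xs k) = 0")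
  case True
  then obtain k where k: "k < length ns" "lpnorm p (ns ! k) (xs k) = 0" by blast
  then have "(\<Prod>k<length ns. lpnorm p (ns ! k) (xs k)) = 0"
    by (intro prod_zero) auto
  moreover have "linform ns A xs = 0"
    using k by (intro linform_eq_0[of k]) (auto simp: lpnorm_eq_0_iff)
  ultimately show ?thesis by (simp del: prod_zero_iff)
next
  case False
  define l where "l k = lpnorm p (ns ! k) (xs k)" for k
  have l: "0 < l k" if "k < length ns" for k
    using False that lpnorm_nonneg[of p "ns ! k" "xs k"] by (auto simp: l_def)
  have L: "0 < (\<Prod>k<length ns. l k)"
    using l by (intro prod_pos) auto
  have scaled: "linform ns A (\<lambda>k i. complex_of_real (1 / l k) * xs k i)
      = complex_of_real (1 / (\<Prod>k<length ns. l k)) * linform ns A xs"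
    by (simp only: linform_scale prod_dividef prod.neutral_const)
  have "cmod (linform ns A xs)
      = (\<Prod>k<length ns. l k) * cmod (linform ns A (\<lambda>k i. complex_of_real (1 / l k) * xs k i))"
    unfolding scaled norm_mult norm_of_real using L by (simp del: prod_zero_iff)
  also have "\<dots> \<le> (\<Prod>k<length ns. l k) * specnorm p ns A"
  proof (intro mult_left_mono specnorm_upper[OF assms])
    show "\<forall>k<length ns. lpnorm p (ns ! k) (\<lambda>i. complex_of_real (1 / l k) * xs k i) = 1"
      unfolding l_def using assms False lpnorm_normalize by blast
  qed (use L in simp)
  finally show ?thesis
    by (simp add: l_def mult.commute)
qed


lemma specnorm_1_eq_maxabs: "specnorm 1 ns A = maxabs ns A"
proof (rule antisym)
  show "specnorm 1 ns A \<le> maxabs ns A"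
  proof (rule specnorm_least)
    fix xs assume "\<forall>k<length ns. lpnorm 1 (ns ! k) (xs k) = 1"
    then show "cmod (linform ns A xs) \<le> maxabs ns A"
      using norm_linform_le_maxabs[of ns A xs] by (simp add: prod.neutral)
  qed simp
  have "idx ns \<noteq> {}"
    using replicate_0_in_idx[OF dims_pos] by blast
  then have "maxabs ns A \<in> (\<lambda>ks. cmod (A ks)) ` idx ns"
    unfolding maxabs_def using finite_idx by (intro Max_in) auto
  then obtain js where js: "js \<in> idx ns" "maxabs ns A = cmod (A js)" by blast
  have "cmod (linform ns A (coordinate_vectors js)) \<le> specnorm 1 ns A"
    using js(1) lpnorm_coordinate_vectors by (intro specnorm_upper) auto
  then show "maxabs ns A \<le> specnorm 1 ns A"
    using js by (simp add: linform_coordinate_vectors)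
qed

lemma specnorm_mono:
  assumes "0 < q" "q \<le> p"
  shows "specnorm q ns A \<le> specnorm p ns A"
proof (rule specnorm_least[OF assms(1)])
  fix xs assume unit: "\<forall>k<length ns. lpnorm q (ns ! k) (xs k) = 1"
  have "(\<Prod>k<length ns. lpnorm p (ns ! k) (xs k)) \<le> 1"
    by (intro prod_le_1 conjI lpnorm_nonneg) (metis assms lpnorm_antimono lessThan_iff unit)
  then have "specnorm p ns A * (\<Prod>k<length ns. lpnorm p (ns ! k) (xs k)) \<le> specnorm p ns A"
    using assms specnorm_nonneg[of p A] by (intro mult_left_le) auto
  then show "cmod (linform ns A xs) \<le> specnorm p ns A"
    using norm_linform_le_specnorm[of p A xs] assms by simp
qed

lemma specnorm_le_powr_mult:
  assumes "0 < q" "q \<le> p"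
  shows "specnorm p ns A \<le> real (prod_list ns) powr (1 / q - 1 / p) * specnorm q ns A"
proof (rule specnorm_least)
  show "0 < p" using assms by simp
  fix xs assume unit: "\<forall>k<length ns. lpnorm p (ns ! k) (xs k) = 1"
  have "(\<Prod>k<length ns. lpnorm q (ns ! k) (xs k))
      \<le> (\<Prod>k<length ns. real (ns ! k) powr (1 / q - 1 / p))"
    by (intro prod_mono conjI lpnorm_nonneg)
      (metis assms lpnorm_le_powr_mult lessThan_iff mult.right_neutral unit)
  also have "\<dots> = real (prod_list ns) powr (1 / q - 1 / p)"
    by (simp add: prod_list_conv_prod_nth prod_powr_distrib)
  finally have "specnorm q ns A * (\<Prod>k<length ns. lpnorm q (ns ! k) (xs k))
      \<le> specnorm q ns A * real (prod_list ns) powr (1 / q - 1 / p)"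
    using assms(1) specnorm_nonneg by (intro mult_left_mono) auto
  then show "cmod (linform ns A xs) \<le> real (prod_list ns) powr (1 / q - 1 / p) * specnorm q ns A"
    using norm_linform_le_specnorm[OF assms(1), of A xs] by (simp add: mult.commute)
qed


lemma prod_list_ge_1: "1 \<le> prod_list ns"
  unfolding prod_list_conv_prod_nth using dims_pos by (intro prod_ge_1) (auto simp: Suc_le_eq)

lemma powr_mult_specnorm_antimono:
  assumes "0 < q" "q \<le> p"
  shows "real (prod_list ns) powr (1 / p) * specnorm p ns A \<le> real (prod_list ns) powr (1 / q) * specnorm q ns A"
proof -
  have "real (prod_list ns) powr (1 / p) * specnorm p ns A
      \<le> real (prod_list ns) powr (1 / p) * (real (prod_list ns) powr (1 / q - 1 / p) * specnorm q ns A)"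
    using specnorm_le_powr_mult[OF assms] by (intro mult_left_mono) auto
  also have "\<dots> = real (prod_list ns) powr (1 / q) * specnorm q ns A"
    by (simp add: mult.assoc[symmetric] powr_add[symmetric])
  finally show ?thesis .
qed

lemma specnorm_diff_le:
  assumes "1 \<le> q" "q \<le> p"
  shows "specnorm p ns A - specnorm q ns A
    \<le> (p - q) * norm1 ns A * real (prod_list ns) * ln (real (prod_list ns))"
proof -
  define N where "N = real (prod_list ns)"
  define t where "t = 1 / q - 1 / p"
  have N: "1 \<le> N" using prod_list_ge_1 by (simp add: N_def)
  have "1 / p \<le> 1 / q" "1 / q \<le> 1" "0 \<le> 1 / p"
    using assms by (auto simp: frac_le)
  then have t: "0 \<le> t" "t \<le> 1" "t \<le> p - q"
    unfolding t_def using inverse_diff_le_diff[OF assms] by linarith+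
  have q: "0 \<le> specnorm q ns A" "specnorm q ns A \<le> norm1 ns A"
    using assms specnorm_nonneg specnorm_le_norm1 by auto
  have "specnorm p ns A - specnorm q ns A \<le> (N powr t - 1) * specnorm q ns A"
    using specnorm_le_powr_mult[of q p A] assms by (simp add: N_def t_def algebra_simps)
  also have "\<dots> \<le> (t * ln N * N powr t) * norm1 ns A"
    using q N t powr_minus_1_le[OF N t(1)] ge_one_powr_ge_zero[OF N t(1)]
    by (intro mult_mono) auto
  also have "\<dots> \<le> ((p - q) * ln N * N) * norm1 ns A"
    using q N t powr_mono[OF t(2) N] by (intro mult_right_mono mult_mono) auto
  finally show ?thesis by (simp add: N_def mult_ac)
qed

end

theorem proposition4:
  fixes ns :: "nat list" and A :: "nat list \<Rightarrow> complex"
  assumes "\<forall>k<length ns. ns ! k \<ge> 1"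
  defines "N \<equiv> prod_list ns"
  shows "specnorm 1 ns A = maxabs ns A
    \<and> (\<forall>p q::real. p \<ge> q \<and> q \<ge> 1 \<longrightarrow> specnorm p ns A \<ge> specnorm q ns A)
    \<and> (\<forall>p q::real. p \<ge> q \<and> q \<ge> 1 \<longrightarrow>
           real N powr (1 / p) * specnorm p ns A \<le> real N powr (1 / q) * specnorm q ns A)
    \<and> (\<forall>p::real. p \<ge> 1 \<longrightarrow> specnorm p ns A \<le> norm1 ns A)
    \<and> (\<forall>p q::real. p \<ge> q \<and> q \<ge> 1 \<longrightarrow>
           0 \<le> specnorm p ns A - specnorm q ns A \<and>
           specnorm p ns A - specnorm q ns A \<le> (p - q) * norm1 ns A * real N * ln (real N))"
proof -
  have dims_pos: "\<forall>k<length ns. 0 < ns ! k"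
    using assms(1) by (simp add: Suc_le_eq)
  show ?thesis
    unfolding N_def
    by (auto simp: specnorm_1_eq_maxabs[OF dims_pos]
        intro: specnorm_mono[OF dims_pos] powr_mult_specnorm_antimono[OF dims_pos]
          specnorm_le_norm1[OF dims_pos] specnorm_diff_le[OF dims_pos])
qed

end
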